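(* Let $\mathcal P_1$ and $\mathcal P_2$ be two shortest paths between nodes $u_0$ and $u_1$, and let $u_2$ be a node on $\mathcal P_2$ distinct from $u_0,u_1$. Consider the shortest-path triangle $\Delta_{\{u_0,u_1,u_2\}}$ whose sides are $\mathcal P_1$ and the two subpaths of $\mathcal P_2$ from $u_0$ to $u_2$ and from $u_2$ to $u_1$. Then the Hausdorff distance satisfies $$d_H(\mathcal P_1,\mathcal P_2)=\max\Big\{\max_{v_1\in\mathcal P_1}\min_{v_2\in\mathcal P_2}d_{v_1,v_2},\ \max_{v_2\in\mathcal P_2}\min_{v_1\in\mathcal P_1}d_{v_1,v_2}\Big\}\le 6\,\delta_{\Delta_{\{u_0,u_1,u_2\}}}+2.$$
   Context: $G=(V,E)$ is a finite connected undirected graph with $n\ge 4$ nodes and $d_{u,v}$ denotes the shortest-path distance (number of edges). For any four nodes $w_1,w_2,w_3,w_4$, form the three sums $d_{w_1,w_2}+d_{w_3,w_4}$, $d_{w_1,w_3}+d_{w_2,w_4}$, $d_{w_1,w_4}+d_{w_2,w_3}$, order them as $S\le M\le L$, and set $\delta_{w_1,w_2,w_3,w_4}=(L-M)/2$. A shortest-path triangle $\Delta_{\{u_0,u_1,u_2\}}$ consists of three distinct nodes with chosen shortest paths between each pair; $\delta_{\Delta_{\{u_0,u_1,u_2\}}}$ is the maximum of $\delta_{w_1,w_2,w_3,w_4}$ over all quadruples of nodes lying on these three paths. *)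

theory Defs
  imports Complex_Main
begin

text \<open>Walks/paths are non-empty
  vertex lists; the length of a walk is the number of edges (length - 1).\<close>

definition graph :: "'a set \<Rightarrow> ('a \<Rightarrow> 'a \<Rightarrow> bool) \<Rightarrow> bool" where
  "graph V E \<longleftrightarrow> finite V \<and> (\<forall>x y. E x y \<longrightarrow> x \<in> V \<and> y \<in> V)
     \<and> (\<forall>x y. E x y \<longrightarrow> E y x) \<and> (\<forall>x. \<not> E x x)"

definition walk :: "('a \<Rightarrow> 'a \<Rightarrow> bool) \<Rightarrow> 'a list \<Rightarrow> bool" where
  "walk E p \<longleftrightarrow> p \<noteq> [] \<and> (\<forall>i. Suc i < length p \<longrightarrow> E (p ! i) (p ! Suc i))"

definition connected_graph :: "'a set \<Rightarrow> ('a \<Rightarrow> 'a \<Rightarrow> bool) \<Rightarrow> bool" where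
  "connected_graph V E \<longleftrightarrow> graph V E \<and> V \<noteq> {} \<and>
     (\<forall>u\<in>V. \<forall>v\<in>V. \<exists>p. walk E p \<and> hd p = u \<and> last p = v)"

definition gdist :: "('a \<Rightarrow> 'a \<Rightarrow> bool) \<Rightarrow> 'a \<Rightarrow> 'a \<Rightarrow> nat" where
  "gdist E u v = (LEAST n. \<exists>p. walk E p \<and> hd p = u \<and> last p = v \<and> length p = Suc n)"

definition shortest_path :: "('a \<Rightarrow> 'a \<Rightarrow> bool) \<Rightarrow> 'a \<Rightarrow> 'a \<Rightarrow> 'a list \<Rightarrow> bool" where
  "shortest_path E u v p \<longleftrightarrow> walk E p \<and> hd p = u \<and> last p = v \<and> length p = Suc (gdist E u v)"

definition delta4 :: "('a \<Rightarrow> 'a \<Rightarrow> bool) \<Rightarrow> 'a \<Rightarrow> 'a \<Rightarrow> 'a \<Rightarrow> 'a \<Rightarrow> real" where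
  "delta4 E w1 w2 w3 w4 =
     (let s = sort [gdist E w1 w2 + gdist E w3 w4, gdist E w1 w3 + gdist E w2 w4,
                    gdist E w1 w4 + gdist E w2 w3]
      in (real (s ! 2) - real (s ! 1)) / 2)"

definition delta_tri :: "('a \<Rightarrow> 'a \<Rightarrow> bool) \<Rightarrow> 'a list \<Rightarrow> 'a list \<Rightarrow> 'a list \<Rightarrow> real" where
  "delta_tri E p q r =
     (let S = set p \<union> set q \<union> set r in
      Max {delta4 E w1 w2 w3 w4 | w1 w2 w3 w4. w1 \<in> S \<and> w2 \<in> S \<and> w3 \<in> S \<and> w4 \<in> S})"

definition hausdorff :: "('a \<Rightarrow> 'a \<Rightarrow> bool) \<Rightarrow> 'a list \<Rightarrow> 'a list \<Rightarrow> nat" where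
  "hausdorff E p q =
     max (Max ((\<lambda>v1. Min ((\<lambda>v2. gdist E v1 v2) ` set q)) ` set p))
         (Max ((\<lambda>v2. Min ((\<lambda>v1. gdist E v1 v2) ` set p)) ` set q))"

end

theory Submission
  imports Defs
begin

text \<open>Let \<open>x\<close> and \<open>y\<close> be the nodes at the same position \<open>i\<close> of two shortest
  \<open>u\<^sub>0\<close>--\<open>u\<^sub>1\<close> paths of length \<open>L\<close>. Both mixed pair sums
  \<open>d(u\<^sub>0,x) + d(u\<^sub>1,y)\<close> and \<open>d(u\<^sub>0,y) + d(u\<^sub>1,x)\<close> are at most \<open>i + (L - i) = L\<close>, whereas
  \<open>d(u\<^sub>0,u\<^sub>1) + d(x,y) = L + d(x,y)\<close>. Hence the four-point quantity of \<open>u\<^sub>0,u\<^sub>1,x,y\<close> is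
  at least \<open>d(x,y)/2\<close>, and all four nodes lie on the triangle. Pairing the nodes of the
  two paths position by position bounds the Hausdorff distance by \<open>2\<delta> \<le> 6\<delta> + 2\<close>;
  neither the choice of \<open>u\<^sub>2\<close> nor the size of the graph plays a role.\<close>

lemma gdist_le_walk_length:
  assumes "walk E p" "hd p = u" "last p = v"
  shows "gdist E u v \<le> length p - 1"
proof -
  have "length p = Suc (length p - 1)"
    using assms(1) by (simp add: walk_def)
  then show ?thesis
    unfolding gdist_def using assms by (metis (mono_tags, lifting) Least_le)
qed

lemma walk_take:
  assumes "walk E p" "n > 0"
  shows "walk E (take n p)"
  using assms unfolding walk_def by auto

lemma walk_drop:
  assumes "walk E p" "n < length p"
  shows "walk E (drop n p)"
  using assms unfolding walk_def by (auto simp: add.commute)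

lemma walk_rev:
  assumes "walk E p" "\<And>x y. E x y \<Longrightarrow> E y x"
  shows "walk E (rev p)"
  unfolding walk_def
proof (intro conjI allI impI)
  show "rev p \<noteq> []"
    using assms(1) by (simp add: walk_def)
next
  fix i
  assume i: "Suc i < length (rev p)"
  define j where "j = length p - Suc (Suc i)"
  have "E (p ! j) (p ! Suc j)"
    using assms(1) i unfolding walk_def j_def by auto
  moreover have "Suc j = length p - Suc i"
    using i by (simp add: j_def)
  ultimately show "E (rev p ! i) (rev p ! Suc i)"
    using i assms(2) by (simp add: rev_nth j_def)
qed

lemma shortest_path_nth_gdist:
  assumes sym: "\<And>x y. E x y \<Longrightarrow> E y x"
    and p: "shortest_path E u v p" and i: "i < length p"
  shows "gdist E u (p ! i) \<le> i" and "gdist E v (p ! i) \<le> gdist E u v - i"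
proof -
  have w: "walk E p" "hd p = u" "last p = v" "length p = Suc (gdist E u v)"
    using p by (auto simp: shortest_path_def)
  have "hd (take (Suc i) p) = u"
    using w(2) by simp
  moreover have "last (take (Suc i) p) = p ! i"
    using i by (simp add: take_Suc_conv_app_nth)
  ultimately have "gdist E u (p ! i) \<le> length (take (Suc i) p) - 1"
    by (intro gdist_le_walk_length walk_take[OF w(1)]) simp_all
  then show "gdist E u (p ! i) \<le> i"
    using i by simp
  have "hd (rev (drop i p)) = v" "last (rev (drop i p)) = p ! i"
    using w(3) i by (simp_all add: hd_rev last_rev hd_drop_conv_nth)
  then have "gdist E v (p ! i) \<le> length (rev (drop i p)) - 1"
    by (intro gdist_le_walk_length walk_rev[OF walk_drop[OF w(1) i] sym])
  then show "gdist E v (p ! i) \<le> gdist E u v - i"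
    using w(4) by simp
qed

lemma sort3_of_largest_first:
  fixes a b c :: nat
  assumes "a \<le> c" "b \<le> c"
  shows "sort [c, a, b] ! 2 = c" and "sort [c, a, b] ! 1 = max a b"
  using assms by (cases "a \<le> b"; simp)+

lemma gdist_le_delta4:
  assumes "gdist E w1 w3 + gdist E w2 w4 \<le> gdist E w1 w2"
    and "gdist E w1 w4 + gdist E w2 w3 \<le> gdist E w1 w2"
  shows "real (gdist E w3 w4) \<le> 2 * delta4 E w1 w2 w3 w4"
  using assms sort3_of_largest_first[of "gdist E w1 w3 + gdist E w2 w4"
      "gdist E w1 w2 + gdist E w3 w4" "gdist E w1 w4 + gdist E w2 w3"]
  unfolding delta4_def Let_def by (simp add: max_def)

lemma gdist_nth_shortest_paths_le_delta4:
  assumes sym: "\<And>x y. E x y \<Longrightarrow> E y x"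
    and p: "shortest_path E u v p" and q: "shortest_path E u v q"
    and i: "i < length p"
  shows "real (gdist E (p ! i) (q ! i)) \<le> 2 * delta4 E u v (p ! i) (q ! i)"
proof (rule gdist_le_delta4)
  have "length q = length p"
    using p q by (simp add: shortest_path_def)
  then have "i < length q"
    using i by simp
  moreover have "i \<le> gdist E u v"
    using p i by (simp add: shortest_path_def)
  ultimately show "gdist E u (p ! i) + gdist E v (q ! i) \<le> gdist E u v"
    and "gdist E u (q ! i) + gdist E v (p ! i) \<le> gdist E u v"
    using shortest_path_nth_gdist[OF sym p i] shortest_path_nth_gdist[OF sym q] by fastforce+
qed

lemma finite_image_quadruples:
  assumes "finite S"
  shows "finite {f w1 w2 w3 w4 | w1 w2 w3 w4. w1 \<in> S \<and> w2 \<in> S \<and> w3 \<in> S \<and> w4 \<in> S}"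
proof (rule finite_subset)
  show "{f w1 w2 w3 w4 | w1 w2 w3 w4. w1 \<in> S \<and> w2 \<in> S \<and> w3 \<in> S \<and> w4 \<in> S}
      \<subseteq> (\<lambda>(w1, w2, w3, w4). f w1 w2 w3 w4) ` (S \<times> S \<times> S \<times> S)"
  proof
    fix z
    assume "z \<in> {f w1 w2 w3 w4 | w1 w2 w3 w4. w1 \<in> S \<and> w2 \<in> S \<and> w3 \<in> S \<and> w4 \<in> S}"
    then obtain w1 w2 w3 w4 where "z = f w1 w2 w3 w4" "w1 \<in> S" "w2 \<in> S" "w3 \<in> S" "w4 \<in> S"
      by blast
    then show "z \<in> (\<lambda>(w1, w2, w3, w4). f w1 w2 w3 w4) ` (S \<times> S \<times> S \<times> S)"
      by (intro image_eqI[where x = "(w1, w2, w3, w4)"]) simp_all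
  qed
qed (use assms in \<open>intro finite_imageI finite_cartesian_product\<close>)

lemma set_take_Suc_Un_drop: "set (take (Suc k) xs) \<union> set (drop k xs) = set xs"
proof -
  have "set xs = set (take k xs) \<union> set (drop k xs)"
    by (metis append_take_drop_id set_append)
  then show ?thesis
    using set_take_subset[of "Suc k" xs] set_take_subset_set_take[of k "Suc k" xs] by auto
qed

lemma delta4_le_delta_tri:
  assumes "w1 \<in> S" "w2 \<in> S" "w3 \<in> S" "w4 \<in> S" and "S = set p \<union> set q \<union> set r"
  shows "delta4 E w1 w2 w3 w4 \<le> delta_tri E p q r"
  unfolding delta_tri_def Let_def assms(5)[symmetric]
  using assms by (intro Max_ge finite_image_quadruples) blast+

lemma real_Max_image_le:
  fixes f :: "'a \<Rightarrow> nat"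
  assumes "finite A" "A \<noteq> {}" "\<And>x. x \<in> A \<Longrightarrow> real (f x) \<le> B"
  shows "real (Max (f ` A)) \<le> B"
proof -
  have "Max (f ` A) \<in> f ` A"
    using assms(1,2) by simp
  then show ?thesis
    using assms(3) by auto
qed

lemma hausdorff_le_if_nth_gdist_le:
  assumes "length p = length q" "p \<noteq> []"
    and close: "\<And>i. i < length p \<Longrightarrow> real (gdist E (p ! i) (q ! i)) \<le> B"
  shows "real (hausdorff E p q) \<le> B"
proof -
  have "real (Min ((\<lambda>y. gdist E x y) ` set q)) \<le> B" if "x \<in> set p" for x
  proof -
    obtain i where i: "i < length p" "x = p ! i"
      using \<open>x \<in> set p\<close> by (auto simp: in_set_conv_nth)
    then have "Min ((\<lambda>y. gdist E x y) ` set q) \<le> gdist E (p ! i) (q ! i)"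
      using assms(1) by (intro Min_le) auto
    then show ?thesis
      using close[OF i(1)] by linarith
  qed
  then have "real (Max ((\<lambda>x. Min ((\<lambda>y. gdist E x y) ` set q)) ` set p)) \<le> B"
    using assms(2) by (intro real_Max_image_le) auto
  moreover have "real (Min ((\<lambda>x. gdist E x y) ` set p)) \<le> B" if "y \<in> set q" for y
  proof -
    obtain i where i: "i < length p" "y = q ! i"
      using \<open>y \<in> set q\<close> assms(1) by (auto simp: in_set_conv_nth)
    then have "Min ((\<lambda>x. gdist E x y) ` set p) \<le> gdist E (p ! i) (q ! i)"
      by (intro Min_le) auto
    then show ?thesis
      using close[OF i(1)] by linarith
  qed
  then have "real (Max ((\<lambda>y. Min ((\<lambda>x. gdist E x y) ` set p)) ` set q)) \<le> B"
    using assms(1,2) by (intro real_Max_image_le) auto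
  ultimately show ?thesis
    unfolding hausdorff_def by linarith
qed

theorem corollary3:
  fixes V :: "'a set" and E :: "'a \<Rightarrow> 'a \<Rightarrow> bool"
    and P1 P2 :: "'a list" and u0 u1 u2 :: 'a and k :: nat
  assumes "connected_graph V E" and "card V \<ge> 4"
    and "u0 \<in> V" and "u1 \<in> V" and "u0 \<noteq> u1"
    and "shortest_path E u0 u1 P1" and "shortest_path E u0 u1 P2"
    and "k < length P2" and "u2 = P2 ! k" and "u2 \<noteq> u0" and "u2 \<noteq> u1"
  shows "real (hausdorff E P1 P2)
           \<le> 6 * delta_tri E P1 (take (Suc k) P2) (drop k P2) + 2"
proof -
  define S where "S = set P1 \<union> set (take (Suc k) P2) \<union> set (drop k P2)"
  define D where "D = delta_tri E P1 (take (Suc k) P2) (drop k P2)"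
  have sym: "\<And>x y. E x y \<Longrightarrow> E y x"
    using assms(1) by (simp add: connected_graph_def graph_def)
  have P1: "length P1 = length P2" "P1 \<noteq> []" "hd P1 = u0" "last P1 = u1"
    using assms(6,7) by (auto simp: shortest_path_def)
  have S: "S = set P1 \<union> set P2"
    unfolding S_def using set_take_Suc_Un_drop[of k P2] by blast
  have u: "u0 \<in> S" "u1 \<in> S"
    using P1(2-4) S by auto
  have close: "real (gdist E (P1 ! i) (P2 ! i)) \<le> 2 * D" if i: "i < length P1" for i
  proof -
    have "P1 ! i \<in> S" "P2 ! i \<in> S"
      using S i P1(1) by simp_all
    then have "delta4 E u0 u1 (P1 ! i) (P2 ! i) \<le> D"
      unfolding D_def using u by (intro delta4_le_delta_tri[OF _ _ _ _ S_def])
    then show ?thesis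
      using gdist_nth_shortest_paths_le_delta4[OF sym assms(6,7) i] by linarith
  qed
  have "real (hausdorff E P1 P2) \<le> 2 * D"
    using hausdorff_le_if_nth_gdist_le[OF P1(1,2)] close .
  moreover have "0 \<le> D"
    using close[of 0] P1(2) by simp
  ultimately show ?thesis
    unfolding D_def by linarith
qed

end
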